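(* Let $(G,\tau)$ be a Hausdorff topological group. (i) If $(G,\tau)$ is metrizable and compact, then $(G,\mathcal{S}_\tau)$ is $b$-bounded. (ii) If $(G,\tau)$ is countably infinite and metrizable, then $(G,\mathcal{S}_\tau)$ is not $b$-bounded.
   Context: $\mathcal{S}_\tau$ is the smallest group ideal on $G$ containing every set $\{x\}\cup\{x_n:n\in\omega\}$ with $x_n\to x$ in $(G,\tau)$. A group ideal on $G$ is a family of subsets containing all finite subsets, closed under subsets and under $(A,B)\mapsto AB^{-1}$; it defines the coarse structure on $G$ with base $\{\{(x,y):x\in Ay\}:A\in\mathcal{I}\}$, and the bounded subsets of $(G,\mathcal{I})$ are exactly the members of $\mathcal{I}$. A function $f:(X,\mathcal{E})\to\mathbb{R}$ is bornologous if $f(B)$ is bounded in $\mathbb{R}$ for every bounded subset $B$ of $X$. A coarse space is $b$-bounded if every bornologous function on it is bounded. *)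

theory Defs
  imports "HOL-Analysis.Analysis"
begin

text \<open>Groups are written additively (type class group_add, not necessarily
commutative); the multiplicative set A B^{-1} becomes {a - b}.\<close>

definition group_ideal :: "('a::group_add) set set \<Rightarrow> bool" where
  "group_ideal I \<longleftrightarrow>
     (\<forall>F. finite F \<longrightarrow> F \<in> I) \<and>
     (\<forall>A\<in>I. \<forall>B. B \<subseteq> A \<longrightarrow> B \<in> I) \<and>
     (\<forall>A\<in>I. \<forall>B\<in>I. {a - b | a b. a \<in> A \<and> b \<in> B} \<in> I)"

definition S_tau :: "('a::{group_add,topological_space}) set set" where
  "S_tau = \<Inter>{I. group_ideal I \<and>
       (\<forall>x (xs::nat \<Rightarrow> 'a). xs \<longlonglongrightarrow> x \<longrightarrow> insert x (range xs) \<in> I)}"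

text \<open>Entourages of the coarse structure defined by a group ideal: subsets of
the base sets {(x,y). x \<in> A y} = {(x,y). x - y \<in> A}, A \<in> I.\<close>
definition ideal_entourage :: "('a::group_add) set set \<Rightarrow> ('a \<times> 'a) set \<Rightarrow> bool" where
  "ideal_entourage I E \<longleftrightarrow> (\<exists>A\<in>I. E \<subseteq> {(x,y). \<exists>a\<in>A. x = a + y})"

definition coarse_bounded :: "('a::group_add) set set \<Rightarrow> 'a set \<Rightarrow> bool" where
  "coarse_bounded I B \<longleftrightarrow> ideal_entourage I (B \<times> B)"

definition bornologous :: "('a::group_add) set set \<Rightarrow> ('a \<Rightarrow> real) \<Rightarrow> bool" where
  "bornologous I f \<longleftrightarrow> (\<forall>B. coarse_bounded I B \<longrightarrow> bounded (f ` B))"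

definition b_bounded :: "('a::group_add) set set \<Rightarrow> bool" where
  "b_bounded I \<longleftrightarrow> (\<forall>f. bornologous I f \<longrightarrow> bounded (range f))"

end

theory Submission
  imports Defs
begin

text \<open>
  The members of a group ideal are exactly its coarse-bounded sets, so a function is
  bornologous for \<open>S_tau\<close> iff it is bounded on every member of \<open>S_tau\<close>.

  (i) A compact metrizable group is sequentially compact. An unbounded function blows up
  along some sequence, hence along a convergent subsequence, whose terms together with the
  limit form a member of \<open>S_tau\<close>; so the function is not bornologous.

  (ii) Every member of \<open>S_tau\<close> lies in a compact set, because the relatively compact sets form
  a group ideal containing the convergent sequences. A countable infinite Hausdorff group is
  not compact: by Baire's theorem some point, hence by homogeneity every point, would be
  isolated. So the metrizable group contains an infinite set \<open>D\<close> without limit points, which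
  meets every compact set in finitely many points, and an enumeration of \<open>D\<close> extended by
  \<open>0\<close> is an unbounded bornologous function.
\<close>

lemma group_ideal_finite: "group_ideal I \<Longrightarrow> finite F \<Longrightarrow> F \<in> I"
  unfolding group_ideal_def by blast

lemma group_ideal_subset: "group_ideal I \<Longrightarrow> A \<in> I \<Longrightarrow> B \<subseteq> A \<Longrightarrow> B \<in> I"
  unfolding group_ideal_def by blast

lemma group_ideal_diff:
  "group_ideal I \<Longrightarrow> A \<in> I \<Longrightarrow> B \<in> I \<Longrightarrow> {a - b | a b. a \<in> A \<and> b \<in> B} \<in> I"
  unfolding group_ideal_def by blast

lemma group_ideal_Inter: "(\<And>I. I \<in> \<I> \<Longrightarrow> group_ideal I) \<Longrightarrow> group_ideal (\<Inter>\<I>)"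
  unfolding group_ideal_def by (simp add: subset_iff) blast

lemma group_ideal_S_tau: "group_ideal (S_tau :: 'a::{group_add,topological_space} set set)"
  unfolding S_tau_def by (rule group_ideal_Inter) simp

lemma convergent_sequence_in_S_tau:
  "(xs :: nat \<Rightarrow> 'a::{group_add,topological_space}) \<longlonglongrightarrow> x \<Longrightarrow> insert x (range xs) \<in> S_tau"
  unfolding S_tau_def by blast

lemma S_tau_least:
  assumes "group_ideal J" and "\<And>x (xs :: nat \<Rightarrow> 'a). xs \<longlonglongrightarrow> x \<Longrightarrow> insert x (range xs) \<in> J"
  shows "(S_tau :: 'a::{group_add,topological_space} set set) \<subseteq> J"
  unfolding S_tau_def using assms by blast

lemma coarse_bounded_iff_mem:
  assumes I: "group_ideal I"
  shows "coarse_bounded I B \<longleftrightarrow> B \<in> I"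
proof
  assume "coarse_bounded I B"
  then obtain A where "A \<in> I" and A: "B \<times> B \<subseteq> {(x, y). \<exists>a\<in>A. x = a + y}"
    unfolding coarse_bounded_def ideal_entourage_def by blast
  show "B \<in> I"
  proof (cases "B = {}")
    case True
    then show ?thesis by (simp add: group_ideal_finite I)
  next
    case False
    then obtain b where "b \<in> B" by blast
    have "B \<subseteq> {a - c | a c. a \<in> A \<and> c \<in> {-b}}"
    proof
      fix x assume "x \<in> B"
      then obtain a where "a \<in> A" "x = a + b"
        using A \<open>b \<in> B\<close> by blast
      then have "x = a - (- b)" by simp
      with \<open>a \<in> A\<close> show "x \<in> {a - c | a c. a \<in> A \<and> c \<in> {-b}}" by blast
    qed
    moreover have "{a - c | a c. a \<in> A \<and> c \<in> {-b}} \<in> I"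
      by (intro group_ideal_diff group_ideal_finite I \<open>A \<in> I\<close>) simp
    ultimately show ?thesis by (rule group_ideal_subset[OF I, rotated])
  qed
next
  assume "B \<in> I"
  have "B \<times> B \<subseteq> {(x, y). \<exists>a\<in>{a - b | a b. a \<in> B \<and> b \<in> B}. x = a + y}"
  proof clarify
    fix x y assume "x \<in> B" "y \<in> B"
    moreover have "x = (x - y) + y" by simp
    ultimately show "\<exists>a\<in>{a - b | a b. a \<in> B \<and> b \<in> B}. x = a + y" by blast
  qed
  then show "coarse_bounded I B"
    using group_ideal_diff[OF I \<open>B \<in> I\<close> \<open>B \<in> I\<close>]
    unfolding coarse_bounded_def ideal_entourage_def by blast
qed

lemma bornologous_iff_bounded_on_members:
  "group_ideal I \<Longrightarrow> bornologous I f \<longleftrightarrow> (\<forall>B\<in>I. bounded (f ` B))"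
  by (simp add: bornologous_def coarse_bounded_iff_mem Ball_def)

lemma compact_sequence_with_limit_topological:
  "(xs :: nat \<Rightarrow> 'a::topological_space) \<longlonglongrightarrow> x \<Longrightarrow> compact (insert x (range xs))"
  using compactin_sequence_with_limit[of euclidean xs x "range xs"] by simp

lemma group_ideal_relatively_compact:
  "group_ideal {A :: 'a::topological_group_add set. \<exists>K. compact K \<and> A \<subseteq> K}"
  unfolding group_ideal_def
proof (intro conjI allI impI ballI)
  fix A B :: "'a set"
  assume "A \<in> {A. \<exists>K. compact K \<and> A \<subseteq> K}" "B \<in> {A. \<exists>K. compact K \<and> A \<subseteq> K}"
  then obtain K L where K: "compact K" "A \<subseteq> K" and L: "compact L" "B \<subseteq> L" by blast
  have "compact ((\<lambda>p. fst p - snd p) ` (K \<times> L))"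
    by (intro compact_continuous_image compact_Times K L continuous_intros)
  moreover have "{a - b | a b. a \<in> A \<and> b \<in> B} \<subseteq> (\<lambda>p. fst p - snd p) ` (K \<times> L)"
    using K L by force
  ultimately show "{a - b | a b. a \<in> A \<and> b \<in> B} \<in> {A. \<exists>K. compact K \<and> A \<subseteq> K}" by blast
qed (auto intro: finite_imp_compact)

lemma S_tau_imp_relatively_compact:
  "A \<in> (S_tau :: 'a::topological_group_add set set) \<Longrightarrow> \<exists>K. compact K \<and> A \<subseteq> K"
  using S_tau_least[OF group_ideal_relatively_compact] compact_sequence_with_limit_topological
  by blast

lemma metrizable_compact_imp_seq_compact:
  assumes "metrizable_space (euclidean :: 'a::topological_space topology)" and "compact S"
  shows "seq_compact (S :: 'a set)"
proof -
  obtain M :: "'a set" and d where "Metric_space M d" and top: "euclidean = Metric_space.mtopology M d"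
    using assms(1) unfolding metrizable_space_def by blast
  then show ?thesis
    using assms(2) Metric_space.compactin_sequentially[of M d S]
    by (simp add: seq_compact_def image_subset_iff flip: top) blast
qed

lemma metrizable_not_compact_imp_infinite_without_limit_points:
  assumes "metrizable_space (euclidean :: 'a::topological_space topology)"
    and "\<not> compact (UNIV :: 'a set)"
  shows "\<exists>D :: 'a set. infinite D \<and> (\<forall>x. \<not> x islimpt D)"
proof -
  obtain M :: "'a set" and d where "Metric_space M d" and top: "euclidean = Metric_space.mtopology M d"
    using assms(1) unfolding metrizable_space_def by blast
  moreover have "\<not> compact_space (euclidean :: 'a topology)"
    using assms(2) by (simp add: compact_space_def)
  ultimately obtain D :: "'a set" where "infinite D" and "euclidean derived_set_of D = {}"
    using Metric_space.compact_space_eq_Bolzano_Weierstrass[of M d] by metis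
  moreover have "euclidean derived_set_of D = {x. x islimpt D}"
    by (auto simp: in_derived_set_of islimpt_def; blast)
  ultimately show ?thesis by blast
qed

lemma countable_compact_t2_has_open_singleton:
  assumes "compact (UNIV :: 'a::t2_space set)" and "countable (UNIV :: 'a set)"
  shows "\<exists>x :: 'a. open {x}"
proof (rule ccontr)
  assume "\<nexists>x :: 'a. open {x}"
  then have no_interior: "interior {x} = {}" for x :: 'a
    using interior_subset[of "{x}"] open_interior[of "{x}"] by (metis subset_singletonD)
  have "Hausdorff_space (euclidean :: 'a topology)"
    by (simp add: Hausdorff_space_def disjnt_def) (metis hausdorff)
  moreover have "compact_space (euclidean :: 'a topology)"
    using assms(1) by (simp add: compact_space_def)
  ultimately have lc_regular: "locally_compact_space (euclidean :: 'a topology)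
      \<and> regular_space (euclidean :: 'a topology)"
    by (simp add: compact_imp_locally_compact_space compact_Hausdorff_imp_regular_space)
  have "euclidean interior_of \<Union>(range (\<lambda>x :: 'a. {x})) = {}"
  proof (rule Baire_category_alt)
    show "completely_metrizable_space (euclidean :: 'a topology) \<or>
        locally_compact_space (euclidean :: 'a topology) \<and> regular_space (euclidean :: 'a topology)"
      using lc_regular by blast
    show "countable (range (\<lambda>x :: 'a. {x}))"
      using assms(2) by blast
    show "closedin euclidean T \<and> euclidean interior_of T = {}"
      if "T \<in> range (\<lambda>x :: 'a. {x})" for T
      using that no_interior by auto
  qed
  moreover have "\<Union>(range (\<lambda>x :: 'a. {x})) = UNIV" by blast
  ultimately show False by simp
qed

lemma open_singleton_translate:
  fixes x y :: "'a::topological_group_add"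
  assumes "open {x}"
  shows "open {y}"
proof -
  have "open ((\<lambda>z. (x - y) + z) -` {x})"
    using assms by (intro open_vimage continuous_intros)
  moreover have "(x - y) + z = x \<longleftrightarrow> z = y" for z
    by (metis add_left_cancel diff_add_cancel)
  then have "(\<lambda>z. (x - y) + z) -` {x} = {y}"
    by auto
  ultimately show ?thesis by simp
qed

lemma countable_compact_t2_group_finite:
  assumes "compact (UNIV :: 'a::{topological_group_add,t2_space} set)"
    and "countable (UNIV :: 'a set)"
  shows "finite (UNIV :: 'a set)"
proof -
  obtain x :: 'a where "open {x}"
    using countable_compact_t2_has_open_singleton assms by blast
  then have "openin euclidean {y}" for y :: 'a
    using open_singleton_translate[OF \<open>open {x}\<close>] by simp
  then have "discrete_topology UNIV = (euclidean :: 'a topology)"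
    by (simp add: discrete_topology_unique)
  then show ?thesis
    using assms(1) compact_space_discrete_topology[of "UNIV :: 'a set"]
    by (simp add: compact_space_def)
qed

lemma metrizable_compact_imp_b_bounded_S_tau:
  assumes "metrizable_space (euclidean :: 'a::topological_group_add topology)"
    and "compact (UNIV :: 'a set)"
  shows "b_bounded (S_tau :: 'a set set)"
  unfolding b_bounded_def
proof (intro allI impI)
  fix f :: "'a \<Rightarrow> real"
  assume born: "bornologous S_tau f"
  show "bounded (range f)"
  proof (rule ccontr)
    assume "\<not> bounded (range f)"
    then have "\<forall>n :: nat. \<exists>x. real n < \<bar>f x\<bar>"
      unfolding bounded_real by (auto simp: not_le)
    then obtain \<sigma> where \<sigma>: "real n < \<bar>f (\<sigma> n)\<bar>" for n
      by metis
    obtain l r where "strict_mono r" and lim: "(\<sigma> \<circ> r) \<longlonglongrightarrow> l"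
      using metrizable_compact_imp_seq_compact[OF assms] unfolding seq_compact_def by blast
    have "insert l (range (\<sigma> \<circ> r)) \<in> S_tau"
      using lim by (rule convergent_sequence_in_S_tau)
    then have "bounded (f ` insert l (range (\<sigma> \<circ> r)))"
      using born unfolding bornologous_iff_bounded_on_members[OF group_ideal_S_tau] by blast
    then obtain c where c: "\<bar>f (\<sigma> (r n))\<bar> \<le> c" for n
      unfolding bounded_real by auto
    obtain n where "c < real n"
      using reals_Archimedean2 by blast
    moreover have "real n \<le> real (r n)"
      using seq_suble[OF \<open>strict_mono r\<close>] by simp
    ultimately show False
      using \<sigma>[of "r n"] c[of n] by linarith
  qed
qed

lemma countable_infinite_metrizable_imp_not_b_bounded_S_tau:
  assumes "metrizable_space (euclidean :: 'a::{topological_group_add,t2_space} topology)"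
    and "countable (UNIV :: 'a set)" and "infinite (UNIV :: 'a set)"
  shows "\<not> b_bounded (S_tau :: 'a set set)"
proof -
  obtain D :: "'a set" where "infinite D" and no_limit: "\<And>x. \<not> x islimpt D"
    using metrizable_not_compact_imp_infinite_without_limit_points
      countable_compact_t2_group_finite assms
    by blast
  have enum: "bij_betw (to_nat_on D) D UNIV"
    using to_nat_on_infinite countable_subset[OF subset_UNIV assms(2)] \<open>infinite D\<close> by blast
  define f where "f x = (if x \<in> D then real (to_nat_on D x) else 0)" for x
  have "bornologous S_tau f"
    unfolding bornologous_iff_bounded_on_members[OF group_ideal_S_tau]
  proof
    fix B :: "'a set"
    assume "B \<in> S_tau"
    then obtain K where "compact K" and "B \<subseteq> K"
      using S_tau_imp_relatively_compact by blast
    then have "finite (K \<inter> D)"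
      using finite_not_islimpt_in_compact no_limit by blast
    moreover have "f ` B \<subseteq> insert 0 ((\<lambda>x. real (to_nat_on D x)) ` (K \<inter> D))"
      using \<open>B \<subseteq> K\<close> by (auto simp: f_def)
    ultimately show "bounded (f ` B)"
      by (meson bounded_subset finite_imageI finite_imp_bounded finite_insert)
  qed
  moreover have "\<not> bounded (range f)"
  proof
    assume "bounded (range f)"
    then obtain c where c: "\<And>x. \<bar>f x\<bar> \<le> c"
      unfolding bounded_real by auto
    obtain n :: nat where "c < real n"
      using reals_Archimedean2 by blast
    moreover obtain x where "x \<in> D" and "to_nat_on D x = n"
      using enum by (metis UNIV_I bij_betw_def imageE)
    ultimately show False
      using c[of x] by (simp add: f_def)
  qed
  ultimately show ?thesis
    unfolding b_bounded_def by blast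
qed

theorem theorem9:
  fixes G :: "'a::{topological_group_add, t2_space} itself"
  shows "(metrizable_space (euclidean :: 'a topology) \<and> compact (UNIV :: 'a set)
            \<longrightarrow> b_bounded (S_tau :: 'a set set))
       \<and> (countable (UNIV :: 'a set) \<and> infinite (UNIV :: 'a set)
            \<and> metrizable_space (euclidean :: 'a topology)
            \<longrightarrow> \<not> b_bounded (S_tau :: 'a set set))"
  using metrizable_compact_imp_b_bounded_S_tau[where 'a='a]
    countable_infinite_metrizable_imp_not_b_bounded_S_tau[where 'a='a]
  by blast

end
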